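(* Let $0<\varepsilon\le1$ and let $\vec U\in V_{\mathrm{per}}(\Omega^\varepsilon)$ and $P\in L^2(\Omega^\varepsilon)$ satisfy, for constants $C_1,C_2$ independent of $\varepsilon$, (i) $\|\operatorname{div}\vec U\|_{L^2(\Omega^\varepsilon)}\le C_1\varepsilon^{5/2}$, and (ii) for all $\vec\varphi\in V_{\mathrm{per}}(\Omega^\varepsilon)$: $$\Big|\int_{\Omega^\varepsilon}\nabla\vec U:\nabla\vec\varphi-\int_{\Omega^\varepsilon}P\,\operatorname{div}\vec\varphi\Big|\le C_2\varepsilon^{3/2}\big(\|\nabla\vec\varphi\|_{L^2(\Omega^\varepsilon)^4}+\|\vec\varphi\|_{H^1(\Omega_{\mathrm{ff}})^2}\big).$$ Then there is a constant $C$ (depending only on $C_1,C_2$) such that $$\|\nabla\vec U\|^2_{L^2(\Omega^\varepsilon)^4}\le C\varepsilon^{5/2}\|P\|_{L^2(\Omega^\varepsilon)}+C\varepsilon^{3/2}\big(\|\nabla\vec U\|_{L^2(\Omega^\varepsilon_{\mathrm{pm}})^4}+\|\vec U\|_{H^1(\Omega_{\mathrm{ff}})^2}\big).$$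
   Context: Two-dimensional setting with scale parameter $\varepsilon=\ell/L$. The pore-scale flow domain is $\Omega^\varepsilon=\Omega_{\mathrm{ff}}\cup\Sigma\cup\Omega^\varepsilon_{\mathrm{pm}}$, where $\Omega_{\mathrm{ff}}=(0,L)\times(0,h)$ is the free-flow region, $\Sigma=(0,L)\times\{0\}$ the interface, and $\Omega^\varepsilon_{\mathrm{pm}}$ is the fluid part of the porous region $(0,L)\times(-H,0)$, obtained by periodic repetition of $\varepsilon$-scaled unit cells $\varepsilon Y$ containing a solid inclusion $\varepsilon Y_s$ strictly inside each cell. The test space is $V_{\mathrm{per}}(\Omega^\varepsilon)=\{\vec\phi\in H^1(\Omega^\varepsilon)^2:\ \vec\phi=\vec0$ on the boundaries of the solid inclusions, $\vec\phi=\vec 0$ on $\{x_2=h\}$, $\phi_2=0$ on $\{x_2=-H\}$, $\vec\phi$ is $L$-periodic in $x_1\}$. In the paper, $(\vec U,P)$ is the pair $(\vec U^{6,\varepsilon},P^{6,\varepsilon})$ of velocity and pressure errors between the pore-scale Stokes solution and the constructed multiscale approximation, for which (i) and (ii) are the conclusions of Corollaries 3.3 and 3.4. *)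

theory Defs
  imports "HOL-Analysis.Analysis"
begin

type_synonym pt = "real \<times> real"

definition evec :: "nat \<Rightarrow> pt" where
  "evec j = (if j = 1 then (1, 0) else (0, 1))"

definition pd :: "nat \<Rightarrow> (pt \<Rightarrow> real) \<Rightarrow> pt \<Rightarrow> real" where
  "pd j f x = frechet_derivative f (at x) (evec j)"

fun iter_pd :: "nat list \<Rightarrow> (pt \<Rightarrow> real) \<Rightarrow> pt \<Rightarrow> real" where
  "iter_pd [] f = f"
| "iter_pd (j # js) f = pd j (iter_pd js f)"

definition smooth :: "(pt \<Rightarrow> real) \<Rightarrow> bool" where
  "smooth f \<longleftrightarrow> (\<forall>js x. iter_pd js f differentiable (at x))"

definition test_fun :: "pt set \<Rightarrow> (pt \<Rightarrow> real) \<Rightarrow> bool" where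
  "test_fun \<Omega> \<psi> \<longleftrightarrow> smooth \<psi> \<and> compact (closure {x. \<psi> x \<noteq> 0})
      \<and> closure {x. \<psi> x \<noteq> 0} \<subseteq> \<Omega>"

definition comp :: "nat \<Rightarrow> (pt \<Rightarrow> pt) \<Rightarrow> pt \<Rightarrow> real" where
  "comp i U x = (if i = 1 then fst (U x) else snd (U x))"

definition weak_partial :: "pt set \<Rightarrow> (pt \<Rightarrow> real) \<Rightarrow> nat \<Rightarrow> (pt \<Rightarrow> real) \<Rightarrow> bool" where
  "weak_partial \<Omega> f j g \<longleftrightarrow>
     (\<forall>\<psi>. test_fun \<Omega> \<psi> \<longrightarrow>
        integrable (lebesgue_on \<Omega>) (\<lambda>x. f x * pd j \<psi> x)
      \<and> integrable (lebesgue_on \<Omega>) (\<lambda>x. g x * \<psi> x)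
      \<and> integral\<^sup>L (lebesgue_on \<Omega>) (\<lambda>x. f x * pd j \<psi> x)
          = - integral\<^sup>L (lebesgue_on \<Omega>) (\<lambda>x. g x * \<psi> x))"

definition L2 :: "pt set \<Rightarrow> (pt \<Rightarrow> real) \<Rightarrow> bool" where
  "L2 \<Omega> f \<longleftrightarrow> f \<in> borel_measurable (lebesgue_on \<Omega>)
      \<and> integrable (lebesgue_on \<Omega>) (\<lambda>x. (f x)\<^sup>2)"

definition L2norm :: "pt set \<Rightarrow> (pt \<Rightarrow> real) \<Rightarrow> real" where
  "L2norm \<Omega> f = sqrt (integral\<^sup>L (lebesgue_on \<Omega>) (\<lambda>x. (f x)\<^sup>2))"

definition H1v :: "pt set \<Rightarrow> (pt \<Rightarrow> pt) \<Rightarrow> (nat \<Rightarrow> nat \<Rightarrow> pt \<Rightarrow> real) \<Rightarrow> bool" where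
  "H1v \<Omega> U DU \<longleftrightarrow> (\<forall>i\<in>{1,2}. L2 \<Omega> (comp i U)
      \<and> (\<forall>j\<in>{1,2}. weak_partial \<Omega> (comp i U) j (DU i j) \<and> L2 \<Omega> (DU i j)))"

definition grad_norm :: "pt set \<Rightarrow> (nat \<Rightarrow> nat \<Rightarrow> pt \<Rightarrow> real) \<Rightarrow> real" where
  "grad_norm A DU = sqrt (integral\<^sup>L (lebesgue_on A)
      (\<lambda>x. \<Sum>i\<in>{1,2}. \<Sum>j\<in>{1,2}. (DU i j x)\<^sup>2))"

definition H1norm :: "pt set \<Rightarrow> (pt \<Rightarrow> pt) \<Rightarrow> (nat \<Rightarrow> nat \<Rightarrow> pt \<Rightarrow> real) \<Rightarrow> real" where
  "H1norm A U DU = sqrt (integral\<^sup>L (lebesgue_on A)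
      (\<lambda>x. (fst (U x))\<^sup>2 + (snd (U x))\<^sup>2 + (\<Sum>i\<in>{1,2}. \<Sum>j\<in>{1,2}. (DU i j x)\<^sup>2)))"

definition wdiv :: "(nat \<Rightarrow> nat \<Rightarrow> pt \<Rightarrow> real) \<Rightarrow> pt \<Rightarrow> real" where
  "wdiv DU x = DU 1 1 x + DU 2 2 x"

definition grad_inner :: "pt set \<Rightarrow> (nat \<Rightarrow> nat \<Rightarrow> pt \<Rightarrow> real) \<Rightarrow> (nat \<Rightarrow> nat \<Rightarrow> pt \<Rightarrow> real) \<Rightarrow> real" where
  "grad_inner A DU DV = integral\<^sup>L (lebesgue_on A)
      (\<lambda>x. \<Sum>i\<in>{1,2}. \<Sum>j\<in>{1,2}. DU i j x * DV i j x)"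

definition Omega_ff :: "real \<Rightarrow> real \<Rightarrow> pt set" where
  "Omega_ff L h = {x. 0 < fst x \<and> fst x < L \<and> 0 < snd x \<and> snd x < h}"

definition Sigma_if :: "real \<Rightarrow> pt set" where
  "Sigma_if L = {x. 0 < fst x \<and> fst x < L \<and> snd x = 0}"

text \<open>The solid inclusion eps (k + Y_s) in the cell eps (k + Y), Y = (0,1)^2.\<close>
definition inclusion :: "real \<Rightarrow> int \<Rightarrow> int \<Rightarrow> pt set \<Rightarrow> pt set" where
  "inclusion \<epsilon> k1 k2 Ys = (\<lambda>y. (\<epsilon> * (real_of_int k1 + fst y), \<epsilon> * (real_of_int k2 + snd y))) ` Ys"

definition Omega_pm :: "real \<Rightarrow> real \<Rightarrow> real \<Rightarrow> pt set \<Rightarrow> pt set" where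
  "Omega_pm \<epsilon> L H Ys = {x. 0 < fst x \<and> fst x < L \<and> - H < snd x \<and> snd x < 0}
      - (\<Union>k1. \<Union>k2. inclusion \<epsilon> k1 k2 Ys)"

definition Omega_eps :: "real \<Rightarrow> real \<Rightarrow> real \<Rightarrow> real \<Rightarrow> pt set \<Rightarrow> pt set" where
  "Omega_eps \<epsilon> L h H Ys = Omega_ff L h \<union> Sigma_if L \<union> Omega_pm \<epsilon> L H Ys"

text \<open>Standing geometric assumptions: Y_s is a nonempty compact set strictly
  inside the open unit cell, and the cells eps Y tile (0,L) x (-H,0).\<close>
definition geometry_ok :: "real \<Rightarrow> real \<Rightarrow> real \<Rightarrow> real \<Rightarrow> pt set \<Rightarrow> bool" where
  "geometry_ok \<epsilon> L h H Ys \<longleftrightarrow> 0 < \<epsilon> \<and> 0 < L \<and> 0 < h \<and> 0 < H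
     \<and> compact Ys \<and> Ys \<noteq> {} \<and> Ys \<subseteq> {y. 0 < fst y \<and> fst y < 1 \<and> 0 < snd y \<and> snd y < 1}
     \<and> (\<exists>n::nat. L = real n * \<epsilon>) \<and> (\<exists>m::nat. H = real m * \<epsilon>)"

text \<open>Smooth, L-periodic fields on the plane satisfying the boundary
  conditions of V_per classically.\<close>
definition smooth_bc :: "real \<Rightarrow> real \<Rightarrow> real \<Rightarrow> real \<Rightarrow> pt set \<Rightarrow> (pt \<Rightarrow> pt) \<Rightarrow> bool" where
  "smooth_bc \<epsilon> L h H Ys \<phi> \<longleftrightarrow>
      smooth (comp 1 \<phi>) \<and> smooth (comp 2 \<phi>)
    \<and> (\<forall>a b. \<phi> (a + L, b) = \<phi> (a, b))
    \<and> (\<forall>a. \<phi> (a, h) = (0, 0))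
    \<and> (\<forall>a. snd (\<phi> (a, - H)) = 0)
    \<and> (\<forall>k1 k2. - H \<le> \<epsilon> * real_of_int k2 \<and> \<epsilon> * (real_of_int k2 + 1) \<le> 0 \<longrightarrow>
         (\<forall>x\<in>frontier (inclusion \<epsilon> k1 k2 Ys). \<phi> x = (0, 0)))"

text \<open>V_per(Omega^eps): the H^1(Omega^eps)^2-closure of such smooth fields
  (DU denotes the weak gradient of U).\<close>
definition Vper :: "real \<Rightarrow> real \<Rightarrow> real \<Rightarrow> real \<Rightarrow> pt set \<Rightarrow> (pt \<Rightarrow> pt)
     \<Rightarrow> (nat \<Rightarrow> nat \<Rightarrow> pt \<Rightarrow> real) \<Rightarrow> bool" where
  "Vper \<epsilon> L h H Ys U DU \<longleftrightarrow>
      H1v (Omega_eps \<epsilon> L h H Ys) U DU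
    \<and> (\<exists>\<phi>s :: nat \<Rightarrow> pt \<Rightarrow> pt. (\<forall>n. smooth_bc \<epsilon> L h H Ys (\<phi>s n))
        \<and> (\<lambda>n. H1norm (Omega_eps \<epsilon> L h H Ys) (\<lambda>x. \<phi>s n x - U x)
               (\<lambda>i j x. pd j (comp i (\<phi>s n)) x - DU i j x)) \<longlonglongrightarrow> 0)"

end

theory Submission
  imports Defs
begin

text \<open>Testing (ii) with \<open>\<phi> = U\<close> bounds \<open>\<parallel>\<nabla>U\<parallel>\<^sup>2 - \<integral> P div U\<close> by
  \<open>C\<^sub>2 \<epsilon>^(3/2) (\<parallel>\<nabla>U\<parallel> + \<parallel>U\<parallel>_H1(\<Omega>_ff))\<close>, and by Cauchy-Schwarz and (i) the pressure term is
  at most \<open>C\<^sub>1 \<epsilon>^(5/2) \<parallel>P\<parallel>\<close>. Since the interface is a null set,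
  \<open>\<parallel>\<nabla>U\<parallel>_L2(\<Omega>\<^sup>\<epsilon>) \<le> \<parallel>U\<parallel>_H1(\<Omega>_ff) + \<parallel>\<nabla>U\<parallel>_L2(\<Omega>_pm)\<close>, which removes the full gradient norm
  from the right-hand side at the price of a factor 2 on \<open>C\<^sub>2\<close>.\<close>

lemma Cauchy_Schwarz_integral:
  fixes f g :: "'a \<Rightarrow> real"
  assumes [measurable]: "f \<in> borel_measurable M" "g \<in> borel_measurable M"
    and f2: "integrable M (\<lambda>x. (f x)\<^sup>2)" and g2: "integrable M (\<lambda>x. (g x)\<^sup>2)"
  shows "\<bar>\<integral>x. f x * g x \<partial>M\<bar> \<le> sqrt (\<integral>x. (f x)\<^sup>2 \<partial>M) * sqrt (\<integral>x. (g x)\<^sup>2 \<partial>M)"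
proof -
  have fg: "integrable M (\<lambda>x. \<bar>f x * g x\<bar>)"
  proof (rule Bochner_Integration.integrable_bound[OF Bochner_Integration.integrable_add[OF f2 g2]])
    show "AE x in M. norm \<bar>f x * g x\<bar> \<le> norm ((f x)\<^sup>2 + (g x)\<^sup>2)"
    proof (intro AE_I2)
      fix x
      have "2 * \<bar>f x * g x\<bar> \<le> (f x)\<^sup>2 + (g x)\<^sup>2"
        using sum_squares_bound[of "\<bar>f x\<bar>" "\<bar>g x\<bar>"] by (simp add: abs_mult)
      then show "norm \<bar>f x * g x\<bar> \<le> norm ((f x)\<^sup>2 + (g x)\<^sup>2)"
        by simp
    qed
  qed measurable
  have "ennreal ((\<integral>x. \<bar>f x * g x\<bar> \<partial>M)\<^sup>2) = (\<integral>\<^sup>+x. ennreal \<bar>f x\<bar> * ennreal \<bar>g x\<bar> \<partial>M)\<^sup>2"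
    using nn_integral_eq_integral[OF fg]
    by (simp add: ennreal_power ennreal_mult' abs_mult)
  also have "\<dots> \<le> (\<integral>\<^sup>+x. ennreal \<bar>f x\<bar> ^ 2 \<partial>M) * (\<integral>\<^sup>+x. ennreal \<bar>g x\<bar> ^ 2 \<partial>M)"
    by (rule Cauchy_Schwarz_nn_integral) measurable
  also have "\<dots> = ennreal ((\<integral>x. (f x)\<^sup>2 \<partial>M) * (\<integral>x. (g x)\<^sup>2 \<partial>M))"
    using nn_integral_eq_integral[OF f2] nn_integral_eq_integral[OF g2]
    by (simp add: ennreal_power ennreal_mult)
  finally have "(\<integral>x. \<bar>f x * g x\<bar> \<partial>M)\<^sup>2 \<le> (\<integral>x. (f x)\<^sup>2 \<partial>M) * (\<integral>x. (g x)\<^sup>2 \<partial>M)"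
    by (simp add: ennreal_le_iff)
  then have "\<integral>x. \<bar>f x * g x\<bar> \<partial>M \<le> sqrt (\<integral>x. (f x)\<^sup>2 \<partial>M) * sqrt (\<integral>x. (g x)\<^sup>2 \<partial>M)"
    by (simp add: real_le_rsqrt flip: real_sqrt_mult)
  then show ?thesis
    by (rule order_trans[OF integral_abs_bound])
qed

lemma integrable_lebesgue_on_subset:
  fixes f :: "'a::euclidean_space \<Rightarrow> 'b::{banach, second_countable_topology}"
  assumes "integrable (lebesgue_on T) f" "S \<subseteq> T" "S \<in> sets lebesgue" "T \<in> sets lebesgue"
  shows "integrable (lebesgue_on S) f"
  using assms set_integrable_subset[of lebesgue T f S]
  by (simp add: integrable_restrict_space set_integrable_def)

lemma integral_lebesgue_on_Un:
  fixes f :: "'a::euclidean_space \<Rightarrow> 'b::{banach, second_countable_topology}"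
  assumes f: "integrable (lebesgue_on (A \<union> B)) f"
    and A: "A \<in> sets lebesgue" and B: "B \<in> sets lebesgue" and "A \<inter> B = {}"
  shows "integral\<^sup>L (lebesgue_on (A \<union> B)) f = integral\<^sup>L (lebesgue_on A) f + integral\<^sup>L (lebesgue_on B) f"
proof -
  have "set_integrable lebesgue (A \<union> B) f"
    using f A B by (simp add: integrable_restrict_space set_integrable_def)
  then have "set_integrable lebesgue A f" "set_integrable lebesgue B f"
    using A B by (auto intro: set_integrable_subset)
  then show ?thesis
    using assms set_integral_Un[of A B lebesgue f]
    by (simp add: integral_restrict_space set_lebesgue_integral_def)
qed

lemma integral_lebesgue_on_Un_null:
  fixes f :: "'a::euclidean_space \<Rightarrow> 'b::{banach, second_countable_topology}"
  assumes f: "integrable (lebesgue_on (A \<union> N)) f"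
    and A: "A \<in> sets lebesgue" and N: "N \<in> null_sets lebesgue"
  shows "integral\<^sup>L (lebesgue_on (A \<union> N)) f = integral\<^sup>L (lebesgue_on A) f"
proof -
  have AN: "A \<union> N = A \<union> (N - A)" by blast
  have NA: "N - A \<in> null_sets lebesgue"
    using N A by (rule null_set_Diff)
  have "integral\<^sup>L (lebesgue_on (A \<union> (N - A))) f = integral\<^sup>L (lebesgue_on A) f + integral\<^sup>L (lebesgue_on (N - A)) f"
    using f A NA unfolding AN by (intro integral_lebesgue_on_Un) auto
  then show ?thesis
    unfolding AN by (simp add: integral_eq_zero_null_sets[OF NA])
qed

lemma L2_add:
  assumes "L2 \<Omega> f" "L2 \<Omega> g"
  shows "L2 \<Omega> (\<lambda>x. f x + g x)"
proof -
  have [measurable]: "f \<in> borel_measurable (lebesgue_on \<Omega>)" "g \<in> borel_measurable (lebesgue_on \<Omega>)"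
    and "integrable (lebesgue_on \<Omega>) (\<lambda>x. 2 * (f x)\<^sup>2 + 2 * (g x)\<^sup>2)"
    using assms unfolding L2_def by auto
  moreover have "(f x + g x)\<^sup>2 \<le> 2 * (f x)\<^sup>2 + 2 * (g x)\<^sup>2" for x
    using sum_squares_bound[of "f x" "g x"] by (simp add: power2_sum)
  then have "AE x in lebesgue_on \<Omega>. norm ((f x + g x)\<^sup>2) \<le> norm (2 * (f x)\<^sup>2 + 2 * (g x)\<^sup>2)"
    by (intro AE_I2) simp
  ultimately show ?thesis
    unfolding L2_def by (auto intro: Bochner_Integration.integrable_bound)
qed

lemma Omega_ff_sets: "Omega_ff L h \<in> sets lebesgue"
proof -
  have "open (Omega_ff L h)" unfolding Omega_ff_def
    by (intro open_Collect_conj open_Collect_less continuous_intros)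
  then show ?thesis by (simp add: borel_open sets_completionI_sets)
qed

lemma Sigma_if_null: "Sigma_if L \<in> null_sets lebesgue"
proof -
  have "negligible {x::pt. x \<bullet> (0, 1) = 0}"
    by (rule negligible_standard_hyperplane) (simp add: Basis_prod_def)
  then have "negligible (Sigma_if L)"
    by (rule negligible_subset) (auto simp: Sigma_if_def)
  then show ?thesis by (simp add: negligible_iff_null_sets)
qed

lemma Omega_pm_sets:
  assumes "compact Ys"
  shows "Omega_pm \<epsilon> L H Ys \<in> sets lebesgue"
proof -
  have "closed (inclusion \<epsilon> k1 k2 Ys)" for k1 k2
    unfolding inclusion_def
    by (intro compact_imp_closed compact_continuous_image assms continuous_intros)
  then have "(\<Union>k1. \<Union>k2. inclusion \<epsilon> k1 k2 Ys) \<in> sets borel"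
    by (intro sets.countable_UN') auto
  moreover have "{x::pt. 0 < fst x \<and> fst x < L \<and> - H < snd x \<and> snd x < 0} \<in> sets borel"
    by (intro borel_open open_Collect_conj open_Collect_less continuous_intros)
  ultimately show ?thesis
    unfolding Omega_pm_def by (intro sets_completionI_sets sets.Diff) auto
qed

lemma Omega_eps_sets:
  assumes "compact Ys"
  shows "Omega_eps \<epsilon> L h H Ys \<in> sets lebesgue"
  unfolding Omega_eps_def
  using Omega_ff_sets null_setsD2[OF Sigma_if_null] Omega_pm_sets[OF assms] by (intro sets.Un)

lemma integral_Omega_eps:
  fixes f :: "pt \<Rightarrow> real"
  assumes "compact Ys" "integrable (lebesgue_on (Omega_eps \<epsilon> L h H Ys)) f"
  shows "integral\<^sup>L (lebesgue_on (Omega_eps \<epsilon> L h H Ys)) f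
       = integral\<^sup>L (lebesgue_on (Omega_ff L h)) f + integral\<^sup>L (lebesgue_on (Omega_pm \<epsilon> L H Ys)) f"
proof -
  let ?F = "Omega_ff L h" and ?M = "Omega_pm \<epsilon> L H Ys"
  have eq: "Omega_eps \<epsilon> L h H Ys = (?F \<union> ?M) \<union> Sigma_if L"
    by (auto simp: Omega_eps_def)
  have disj: "?F \<inter> ?M = {}"
    by (auto simp: Omega_ff_def Omega_pm_def)
  have F: "?F \<in> sets lebesgue" and M: "?M \<in> sets lebesgue"
    using Omega_ff_sets Omega_pm_sets[OF assms(1)] .
  then have FM: "?F \<union> ?M \<in> sets lebesgue" by (rule sets.Un)
  have f: "integrable (lebesgue_on ((?F \<union> ?M) \<union> Sigma_if L)) f"
    using assms(2) unfolding eq .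
  have O: "(?F \<union> ?M) \<union> Sigma_if L \<in> sets lebesgue"
    using Omega_eps_sets[OF assms(1), of \<epsilon> L h H] unfolding eq .
  have fFM: "integrable (lebesgue_on (?F \<union> ?M)) f"
    using integrable_lebesgue_on_subset[OF f _ FM O] by blast
  have "integral\<^sup>L (lebesgue_on ((?F \<union> ?M) \<union> Sigma_if L)) f = integral\<^sup>L (lebesgue_on (?F \<union> ?M)) f"
    using f FM Sigma_if_null by (rule integral_lebesgue_on_Un_null)
  also have "\<dots> = integral\<^sup>L (lebesgue_on ?F) f + integral\<^sup>L (lebesgue_on ?M) f"
    using fFM F M disj by (rule integral_lebesgue_on_Un)
  finally show ?thesis unfolding eq .
qed

definition grad_sq :: "(nat \<Rightarrow> nat \<Rightarrow> pt \<Rightarrow> real) \<Rightarrow> pt \<Rightarrow> real" where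
  "grad_sq DU x = (\<Sum>i\<in>{1,2}. \<Sum>j\<in>{1,2}. (DU i j x)\<^sup>2)"

lemma grad_sq_nonneg: "0 \<le> grad_sq DU x"
  unfolding grad_sq_def by (intro sum_nonneg) simp

lemma grad_norm_eq: "grad_norm A DU = sqrt (integral\<^sup>L (lebesgue_on A) (grad_sq DU))"
  by (simp only: grad_norm_def grad_sq_def[abs_def])

lemma H1norm_eq:
  "H1norm A U DU = sqrt (integral\<^sup>L (lebesgue_on A) (\<lambda>x. (fst (U x))\<^sup>2 + (snd (U x))\<^sup>2 + grad_sq DU x))"
  by (simp only: H1norm_def grad_sq_def)

lemma grad_norm_sq: "(grad_norm A DU)\<^sup>2 = grad_inner A DU DU"
proof -
  have "0 \<le> integral\<^sup>L (lebesgue_on A) (grad_sq DU)"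
    by (intro integral_nonneg_AE AE_I2 grad_sq_nonneg)
  then show ?thesis
    by (simp add: grad_norm_eq grad_inner_def grad_sq_def[abs_def] power2_eq_square)
qed

lemma integrable_grad_sq:
  assumes "H1v \<Omega> U DU"
  shows "integrable (lebesgue_on \<Omega>) (grad_sq DU)"
  using assms unfolding grad_sq_def H1v_def L2_def
  by (intro Bochner_Integration.integrable_sum) blast

lemma grad_norm_Omega_eps_le:
  assumes Ys: "compact Ys" and U: "H1v (Omega_eps \<epsilon> L h H Ys) U DU"
  shows "grad_norm (Omega_eps \<epsilon> L h H Ys) DU \<le> H1norm (Omega_ff L h) U DU + grad_norm (Omega_pm \<epsilon> L H Ys) DU"
proof -
  let ?O = "Omega_eps \<epsilon> L h H Ys" and ?F = "Omega_ff L h" and ?M = "Omega_pm \<epsilon> L H Ys"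
  let ?U2 = "\<lambda>x. (fst (U x))\<^sup>2 + (snd (U x))\<^sup>2"
  have G: "integrable (lebesgue_on ?O) (grad_sq DU)"
    using U by (rule integrable_grad_sq)
  have "L2 ?O (comp 1 U)" "L2 ?O (comp 2 U)"
    using U by (simp_all add: H1v_def)
  then have "integrable (lebesgue_on ?O) (\<lambda>x. ?U2 x + grad_sq DU x)"
    using G unfolding L2_def comp_def by (intro Bochner_Integration.integrable_add) simp_all
  moreover have "?F \<subseteq> ?O"
    unfolding Omega_eps_def by blast
  ultimately have "integrable (lebesgue_on ?F) (\<lambda>x. ?U2 x + grad_sq DU x)"
    and "integrable (lebesgue_on ?F) (grad_sq DU)"
    using G Omega_ff_sets Omega_eps_sets[OF Ys] integrable_lebesgue_on_subset by blast+
  then have "integral\<^sup>L (lebesgue_on ?F) (grad_sq DU) \<le> integral\<^sup>L (lebesgue_on ?F) (\<lambda>x. ?U2 x + grad_sq DU x)"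
    by (intro integral_mono) auto
  then have GF: "sqrt (integral\<^sup>L (lebesgue_on ?F) (grad_sq DU)) \<le> H1norm ?F U DU"
    by (simp add: H1norm_eq)
  have "grad_norm ?O DU = sqrt (integral\<^sup>L (lebesgue_on ?F) (grad_sq DU) + integral\<^sup>L (lebesgue_on ?M) (grad_sq DU))"
    using integral_Omega_eps[OF Ys G] by (simp add: grad_norm_eq)
  also have "\<dots> \<le> sqrt (integral\<^sup>L (lebesgue_on ?F) (grad_sq DU)) + sqrt (integral\<^sup>L (lebesgue_on ?M) (grad_sq DU))"
    by (intro sqrt_add_le_add_sqrt integral_nonneg_AE AE_I2 grad_sq_nonneg)
  also have "\<dots> \<le> H1norm ?F U DU + grad_norm ?M DU"
    using GF by (simp add: grad_norm_eq)
  finally show ?thesis .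
qed

lemma energy_estimate:
  fixes C1 C2 \<delta> \<eta> :: real
  assumes U: "H1v \<Omega> U DU" and P: "L2 \<Omega> P"
    and split: "grad_norm \<Omega> DU \<le> H1norm F U DU + grad_norm M DU"
    and div: "L2norm \<Omega> (wdiv DU) \<le> C1 * \<delta>" and \<delta>: "0 \<le> \<delta>" and \<eta>: "0 \<le> \<eta>"
    and test: "\<bar>grad_inner \<Omega> DU DU - integral\<^sup>L (lebesgue_on \<Omega>) (\<lambda>x. P x * wdiv DU x)\<bar>
      \<le> C2 * \<eta> * (grad_norm \<Omega> DU + H1norm F U DU)"
  shows "(grad_norm \<Omega> DU)\<^sup>2 \<le> (\<bar>C1\<bar> + 2 * \<bar>C2\<bar>) * \<delta> * L2norm \<Omega> P
    + (\<bar>C1\<bar> + 2 * \<bar>C2\<bar>) * \<eta> * (grad_norm M DU + H1norm F U DU)"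
proof -
  let ?X = "grad_norm \<Omega> DU" and ?F = "H1norm F U DU" and ?M = "grad_norm M DU"
    and ?p = "L2norm \<Omega> P" and ?J = "integral\<^sup>L (lebesgue_on \<Omega>) (\<lambda>x. P x * wdiv DU x)"
  have nonneg: "0 \<le> ?X" "0 \<le> ?F" "0 \<le> ?M" "0 \<le> ?p"
    by (simp_all add: grad_norm_def H1norm_def L2norm_def)
  have "wdiv DU = (\<lambda>x. DU 1 1 x + DU 2 2 x)"
    by (simp add: fun_eq_iff wdiv_def)
  then have "L2 \<Omega> (wdiv DU)"
    using U by (simp add: H1v_def L2_add)
  then have "\<bar>?J\<bar> \<le> ?p * L2norm \<Omega> (wdiv DU)"
    using P unfolding L2_def L2norm_def by (intro Cauchy_Schwarz_integral) auto
  also have "\<dots> \<le> ?p * (\<bar>C1\<bar> * \<delta>)"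
    using div mult_right_mono[OF abs_ge_self \<delta>, of C1] nonneg(4)
    by (intro mult_left_mono) linarith+
  finally have J: "\<bar>?J\<bar> \<le> \<bar>C1\<bar> * \<delta> * ?p"
    by (simp add: mult_ac)
  have "C2 * \<eta> * (?X + ?F) \<le> \<bar>C2\<bar> * \<eta> * (?X + ?F)"
    using \<eta> nonneg by (intro mult_right_mono) auto
  also have "\<dots> \<le> \<bar>C2\<bar> * \<eta> * (2 * (?M + ?F))"
    using \<eta> nonneg split by (intro mult_left_mono) auto
  finally have R: "C2 * \<eta> * (?X + ?F) \<le> 2 * \<bar>C2\<bar> * \<eta> * (?M + ?F)"
    by (simp add: mult_ac)
  have "?X\<^sup>2 \<le> \<bar>?J\<bar> + C2 * \<eta> * (?X + ?F)"
    using test grad_norm_sq[of \<Omega> DU] abs_ge_self[of ?J] abs_ge_self[of "grad_inner \<Omega> DU DU - ?J"]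
    by linarith
  also have "\<dots> \<le> \<bar>C1\<bar> * \<delta> * ?p + 2 * \<bar>C2\<bar> * \<eta> * (?M + ?F)"
    using J R by (rule add_mono)
  also have "\<dots> \<le> (\<bar>C1\<bar> + 2 * \<bar>C2\<bar>) * \<delta> * ?p + (\<bar>C1\<bar> + 2 * \<bar>C2\<bar>) * \<eta> * (?M + ?F)"
    using \<delta> \<eta> nonneg by (intro add_mono mult_right_mono) auto
  finally show ?thesis .
qed

theorem corollary3p5:
  fixes C1 C2 :: real
  shows "\<exists>C::real. \<forall>\<epsilon> L h H Ys U DU P.
     geometry_ok \<epsilon> L h H Ys \<and> \<epsilon> \<le> 1
   \<and> Vper \<epsilon> L h H Ys U DU
   \<and> L2 (Omega_eps \<epsilon> L h H Ys) P
   \<and> L2norm (Omega_eps \<epsilon> L h H Ys) (wdiv DU) \<le> C1 * \<epsilon> powr (5/2)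
   \<and> (\<forall>\<phi> D\<phi>. Vper \<epsilon> L h H Ys \<phi> D\<phi> \<longrightarrow>
        \<bar>grad_inner (Omega_eps \<epsilon> L h H Ys) DU D\<phi>
          - integral\<^sup>L (lebesgue_on (Omega_eps \<epsilon> L h H Ys)) (\<lambda>x. P x * wdiv D\<phi> x)\<bar>
        \<le> C2 * \<epsilon> powr (3/2) * (grad_norm (Omega_eps \<epsilon> L h H Ys) D\<phi> + H1norm (Omega_ff L h) \<phi> D\<phi>))
   \<longrightarrow> (grad_norm (Omega_eps \<epsilon> L h H Ys) DU)\<^sup>2
        \<le> C * \<epsilon> powr (5/2) * L2norm (Omega_eps \<epsilon> L h H Ys) P
          + C * \<epsilon> powr (3/2) * (grad_norm (Omega_pm \<epsilon> L H Ys) DU + H1norm (Omega_ff L h) U DU)"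
proof (intro exI[of _ "\<bar>C1\<bar> + 2 * \<bar>C2\<bar>"] allI impI, elim conjE)
  fix \<epsilon> L h H Ys U DU P
  let ?O = "Omega_eps \<epsilon> L h H Ys"
  assume geo: "geometry_ok \<epsilon> L h H Ys" and V: "Vper \<epsilon> L h H Ys U DU" and P: "L2 ?O P"
    and div: "L2norm ?O (wdiv DU) \<le> C1 * \<epsilon> powr (5/2)"
    and test: "\<forall>\<phi> D\<phi>. Vper \<epsilon> L h H Ys \<phi> D\<phi> \<longrightarrow>
      \<bar>grad_inner ?O DU D\<phi> - integral\<^sup>L (lebesgue_on ?O) (\<lambda>x. P x * wdiv D\<phi> x)\<bar>
        \<le> C2 * \<epsilon> powr (3/2) * (grad_norm ?O D\<phi> + H1norm (Omega_ff L h) \<phi> D\<phi>)"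
  have Ys: "compact Ys"
    using geo by (simp add: geometry_ok_def)
  have U: "H1v ?O U DU"
    using V by (simp add: Vper_def)
  show "(grad_norm ?O DU)\<^sup>2 \<le> (\<bar>C1\<bar> + 2 * \<bar>C2\<bar>) * \<epsilon> powr (5/2) * L2norm ?O P
    + (\<bar>C1\<bar> + 2 * \<bar>C2\<bar>) * \<epsilon> powr (3/2) * (grad_norm (Omega_pm \<epsilon> L H Ys) DU + H1norm (Omega_ff L h) U DU)"
    using test V by (intro energy_estimate[OF U P grad_norm_Omega_eps_le[OF Ys U] div]) auto
qed

end
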